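(* Let $X$ be a compact metric space, $f\colon X\to X$ continuous with $h_{\mathrm{top}}(f)<\infty$, and $\Phi,\Psi\in C(X)^d$. If $A\subset\mathbb{R}^d$ is compact, then for every $\xi\in C(X)$, $$\overline{\mathcal{F}}(A,\xi)=\sup_{\alpha\in A}\overline{\mathcal{F}}(\{\alpha\},\xi).$$
   Context: $S_n\phi(x)=\sum_{k=0}^{n-1}\phi(f^kx)$; $B(x,n,\delta)=\{y\mid d(f^kx,f^ky)<\delta\text{ for }0\le k\le n\}$. $\Phi=(\varphi_1,\dots,\varphi_d)$, $\Psi=(\psi_1,\dots,\psi_d)$, $\mathcal{A}_n(x)=(S_n\varphi_i(x)/S_n\psi_i(x))_{i=1}^d$, and for open $U\subset\mathbb{R}^d$, $G_n(U)=\{x\in X\mid\mathcal{A}_n(x)\in U\}$. For a sequence $(Z_n)$ of subsets of $X$, $\Lambda_n(Z_n,\xi,\delta)=\inf\{\sum_{x\in E}e^{S_n\xi(x)}\mid\bigcup_{x\in E}B(x,n,\delta)\supset Z_n\}$ and $\overline{CP}_{(Z_n)}(\xi)=\lim_{\delta\to0}\limsup_{n\to\infty}\frac1n\log\Lambda_n(Z_n,\xi,\delta)$. The upper coarse spectrum is $\overline{\mathcal{F}}(A,\xi)=\inf_{U\supset A}\overline{CP}_{(G_n(U))}(\xi)$, the infimum over all open $U\subset\mathbb{R}^d$ containing $A$. *)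

theory Defs
  imports "HOL-Analysis.Analysis" "HOL-Library.Extended_Real"
begin

definition birkhoff_sum :: "('a \<Rightarrow> 'a) \<Rightarrow> ('a \<Rightarrow> real) \<Rightarrow> nat \<Rightarrow> 'a \<Rightarrow> real" where
  "birkhoff_sum f \<phi> n x = (\<Sum>k<n. \<phi> ((f ^^ k) x))"

definition bowen_ball :: "'a::metric_space set \<Rightarrow> ('a \<Rightarrow> 'a) \<Rightarrow> 'a \<Rightarrow> nat \<Rightarrow> real \<Rightarrow> 'a set" where
  "bowen_ball X f x n \<delta> = {y \<in> X. \<forall>k\<le>n. dist ((f ^^ k) x) ((f ^^ k) y) < \<delta>}"

text \<open>Lambda_n(Z, xi, delta): infimum over covers by Bowen balls centred at points of X
  (covers with infinitely many centres give an infinite sum since e^{S_n xi} is bounded below,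
  so it suffices to range over finite centre sets).\<close>
definition Lambda_n :: "'a::metric_space set \<Rightarrow> ('a \<Rightarrow> 'a) \<Rightarrow> nat \<Rightarrow> 'a set \<Rightarrow> ('a \<Rightarrow> real) \<Rightarrow> real \<Rightarrow> ereal" where
  "Lambda_n X f n Z \<xi> \<delta> =
     (INF E \<in> {E. finite E \<and> E \<subseteq> X \<and> Z \<subseteq> (\<Union>x\<in>E. bowen_ball X f x n \<delta>)}.
        ereal (\<Sum>x\<in>E. exp (birkhoff_sum f \<xi> n x)))"

definition ereal_log_rate :: "nat \<Rightarrow> ereal \<Rightarrow> ereal" where
  "ereal_log_rate n L = (if L = 0 then - \<infinity> else if L = \<infinity> then \<infinity>
                          else ereal (ln (real_of_ereal L) / real n))"

definition upper_CP :: "'a::metric_space set \<Rightarrow> ('a \<Rightarrow> 'a) \<Rightarrow> (nat \<Rightarrow> 'a set) \<Rightarrow> ('a \<Rightarrow> real) \<Rightarrow> ereal" where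
  "upper_CP X f Z \<xi> =
     Lim (at_right (0::real))
       (\<lambda>\<delta>. limsup (\<lambda>n. ereal_log_rate n (Lambda_n X f n (Z n) \<xi> \<delta>)))"

definition htop :: "'a::metric_space set \<Rightarrow> ('a \<Rightarrow> 'a) \<Rightarrow> ereal" where
  "htop X f = upper_CP X f (\<lambda>_. X) (\<lambda>_. 0)"

definition ratio_avg :: "('a \<Rightarrow> 'a) \<Rightarrow> ('d \<Rightarrow> 'a \<Rightarrow> real) \<Rightarrow> ('d \<Rightarrow> 'a \<Rightarrow> real) \<Rightarrow> nat \<Rightarrow> 'a \<Rightarrow> real ^ 'd::finite" where
  "ratio_avg f \<Phi> \<Psi> n x = (\<chi> i. birkhoff_sum f (\<Phi> i) n x / birkhoff_sum f (\<Psi> i) n x)"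

definition G_set :: "'a set \<Rightarrow> ('a \<Rightarrow> 'a) \<Rightarrow> ('d \<Rightarrow> 'a \<Rightarrow> real) \<Rightarrow> ('d \<Rightarrow> 'a \<Rightarrow> real) \<Rightarrow> nat \<Rightarrow> (real ^ 'd::finite) set \<Rightarrow> 'a set" where
  "G_set X f \<Phi> \<Psi> n U = {x \<in> X. ratio_avg f \<Phi> \<Psi> n x \<in> U}"

definition upper_coarse_spectrum :: "'a::metric_space set \<Rightarrow> ('a \<Rightarrow> 'a) \<Rightarrow> ('d \<Rightarrow> 'a \<Rightarrow> real) \<Rightarrow> ('d \<Rightarrow> 'a \<Rightarrow> real)
     \<Rightarrow> (real ^ 'd::finite) set \<Rightarrow> ('a \<Rightarrow> real) \<Rightarrow> ereal" where
  "upper_coarse_spectrum X f \<Phi> \<Psi> A \<xi> =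
     (INF U \<in> {U. open U \<and> A \<subseteq> U}. upper_CP X f (\<lambda>n. G_set X f \<Phi> \<Psi> n U) \<xi>)"

end

theory Submission
  imports Defs
begin

text \<open>
  Covering two sets costs at most the sum of the costs, and \<open>(1/n) log 2 \<rightarrow> 0\<close>, so the upper
  capacity pressure of a union of two sequences of sets is the maximum of the two pressures.
  Since \<open>G\<^sub>n\<close> commutes with unions, the pressure of \<open>G\<^sub>n(U)\<close> for a finite union \<open>U\<close> of open
  sets is the maximum over the pieces. Given \<open>M\<close> above the right-hand side, every \<open>\<alpha> \<in> A\<close> has an
  open neighbourhood of pressure \<open>< M\<close>; finitely many of them cover \<open>A\<close>, whence the left-hand
  side is \<open>\<le> M\<close>.
\<close>

lemma ereal_log_rate_mono:
  assumes "0 \<le> a" "a \<le> b"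
  shows "ereal_log_rate n a \<le> ereal_log_rate n b"
proof (cases "a = 0 \<or> b = \<infinity>")
  case True
  then show ?thesis by (auto simp: ereal_log_rate_def)
next
  case False
  then obtain r s where r: "a = ereal r" "0 < r" and s: "b = ereal s"
    using assms by (cases a; cases b) auto
  then have "ln r / real n \<le> ln s / real n"
    using assms by (auto intro: divide_right_mono)
  then show ?thesis using r s assms by (auto simp: ereal_log_rate_def)
qed

lemma ereal_log_rate_double_le:
  assumes "0 \<le> b"
  shows "ereal_log_rate n (2 * b) \<le> ereal_log_rate n b + ereal (ln 2 / real n)"
proof (cases b)
  case (real r)
  with assms consider "r = 0" | "0 < r" by fastforce
  then show ?thesis
  proof cases
    case 2
    then have "ln (2 * r) / real n = ln r / real n + ln 2 / real n"
      by (simp add: ln_mult add_divide_distrib)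
    then show ?thesis using real 2 by (simp add: ereal_log_rate_def)
  qed (simp add: real ereal_log_rate_def)
qed (use assms in \<open>auto simp: ereal_log_rate_def\<close>)

lemma ereal_log_rate_add_le:
  assumes "0 \<le> a" "0 \<le> b"
  shows "ereal_log_rate n (a + b)
           \<le> max (ereal_log_rate n a) (ereal_log_rate n b) + ereal (ln 2 / real n)"
proof -
  have "a + b \<le> max a b + max a b" by (intro add_mono) auto
  also have "\<dots> = 2 * max a b" by (cases "max a b") auto
  finally have "ereal_log_rate n (a + b) \<le> ereal_log_rate n (2 * max a b)"
    using assms by (intro ereal_log_rate_mono) (auto simp: le_max_iff_disj)
  also have "\<dots> \<le> ereal_log_rate n (max a b) + ereal (ln 2 / real n)"
    using assms by (intro ereal_log_rate_double_le) (auto simp: le_max_iff_disj)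
  also have "ereal_log_rate n (max a b) = max (ereal_log_rate n a) (ereal_log_rate n b)"
    using assms ereal_log_rate_mono[of a b n] ereal_log_rate_mono[of b a n]
    by (auto simp: max_def)
  finally show ?thesis .
qed

lemma le_INF_add_INF_ereal:
  fixes f g :: "'i \<Rightarrow> ereal"
  assumes "\<And>i j. i \<in> I \<Longrightarrow> j \<in> J \<Longrightarrow> L \<le> f i + g j"
    and "\<And>i. 0 \<le> f i" "\<And>j. 0 \<le> g j"
  shows "L \<le> (INF i\<in>I. f i) + (INF j\<in>J. g j)"
proof (cases "I = {} \<or> J = {}")
  case True
  then show ?thesis using assms(2,3) by (auto simp: top_ereal_def)
next
  case False
  have "L \<le> (INF i\<in>I. f i + (INF j\<in>J. g j))"
  proof (rule INF_greatest)
    fix i assume "i \<in> I"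
    then have "L \<le> (INF j\<in>J. f i + g j)" using assms(1) by (intro INF_greatest) auto
    also have "\<dots> = f i + (INF j\<in>J. g j)"
      using False assms(2,3) by (intro INF_ereal_add_right) auto
    finally show "L \<le> f i + (INF j\<in>J. g j)" .
  qed
  also have "\<dots> = (INF i\<in>I. f i) + (INF j\<in>J. g j)"
    using False assms(2,3) by (intro INF_ereal_add_left) (auto simp: INF_eq_minf intro!: exI[of _ 0])
  finally show ?thesis .
qed

lemma Lambda_n_nonneg: "0 \<le> Lambda_n X f n Z \<xi> \<delta>"
  unfolding Lambda_n_def by (rule INF_greatest) (auto intro: sum_nonneg)

lemma Lambda_n_empty: "Lambda_n X f n {} \<xi> \<delta> = 0"
  by (rule antisym[OF _ Lambda_n_nonneg]) (auto simp: Lambda_n_def intro: INF_lower2[of "{}"])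

lemma Lambda_n_antimono:
  assumes "\<delta> \<le> \<delta>'"
  shows "Lambda_n X f n Z \<xi> \<delta>' \<le> Lambda_n X f n Z \<xi> \<delta>"
proof -
  have "bowen_ball X f x n \<delta> \<subseteq> bowen_ball X f x n \<delta>'" for x
    using assms unfolding bowen_ball_def by force
  then show ?thesis unfolding Lambda_n_def by (intro INF_superset_mono) blast+
qed

lemma Lambda_n_Un_le:
  "Lambda_n X f n (Z \<union> W) \<xi> \<delta> \<le> Lambda_n X f n Z \<xi> \<delta> + Lambda_n X f n W \<xi> \<delta>"
proof -
  define covers where
    "covers Z = {E. finite E \<and> E \<subseteq> X \<and> Z \<subseteq> (\<Union>x\<in>E. bowen_ball X f x n \<delta>)}" for Z
  define cost where "cost E = ereal (\<Sum>x\<in>E. exp (birkhoff_sum f \<xi> n x))" for E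
  have Lambda: "Lambda_n X f n Z \<xi> \<delta> = (INF E\<in>covers Z. cost E)" for Z
    unfolding Lambda_n_def covers_def cost_def ..
  have "Lambda_n X f n (Z \<union> W) \<xi> \<delta> \<le> cost E1 + cost E2"
    if "E1 \<in> covers Z" "E2 \<in> covers W" for E1 E2
  proof -
    have "E1 \<union> E2 \<in> covers (Z \<union> W)" using that unfolding covers_def by auto
    then have "Lambda_n X f n (Z \<union> W) \<xi> \<delta> \<le> cost (E1 \<union> E2)"
      unfolding Lambda by (rule INF_lower)
    also have "\<dots> \<le> cost E1 + cost E2"
      using that sum_nonneg[of "E1 \<inter> E2" "\<lambda>x. exp (birkhoff_sum f \<xi> n x)"]
      by (auto simp: cost_def covers_def sum_Un)
    finally show ?thesis .
  qed
  then show ?thesis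
    unfolding Lambda[of Z] Lambda[of W]
    by (rule le_INF_add_INF_ereal) (auto simp: cost_def intro: sum_nonneg)
qed

lemma limsup_max_le:
  fixes u v :: "nat \<Rightarrow> ereal"
  shows "limsup (\<lambda>n. max (u n) (v n)) \<le> max (limsup u) (limsup v)"
proof (rule dense_ge)
  fix z assume z: "max (limsup u) (limsup v) < z"
  have "eventually (\<lambda>n. u n < z) sequentially" "eventually (\<lambda>n. v n < z) sequentially"
    using z by (auto intro: Limsup_lessD)
  then have "eventually (\<lambda>n. max (u n) (v n) \<le> z) sequentially"
    by eventually_elim auto
  then show "limsup (\<lambda>n. max (u n) (v n)) \<le> z" by (rule Limsup_bounded)
qed

lemma tendsto_at_right_0_SUP_antimono:
  fixes g :: "real \<Rightarrow> ereal"
  assumes antimono: "\<And>a b. 0 < a \<Longrightarrow> a \<le> b \<Longrightarrow> g b \<le> g a"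
  shows "(g \<longlongrightarrow> (SUP d\<in>{0<..}. g d)) (at_right 0)"
proof (rule order_tendstoI)
  fix y assume "y < (SUP d\<in>{0<..}. g d)"
  then obtain d0 where d0: "0 < d0" "y < g d0" by (auto simp: less_SUP_iff)
  have "eventually (\<lambda>x. x \<in> {0<..<d0}) (at_right (0::real))"
    using d0 by (intro eventually_at_right_real) auto
  then show "eventually (\<lambda>x. y < g x) (at_right 0)"
    by eventually_elim (use d0 antimono in \<open>fastforce intro: less_le_trans\<close>)
next
  fix y assume y: "(SUP d\<in>{0<..}. g d) < y"
  have "eventually (\<lambda>x. 0 < x) (at_right (0::real))"
    by (simp add: eventually_at_right_less)
  then show "eventually (\<lambda>x. g x < y) (at_right 0)"
    by eventually_elim (rule le_less_trans[OF SUP_upper y], simp)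
qed

lemma upper_CP_eq_SUP:
  "upper_CP X f Z \<xi> = (SUP \<delta>\<in>{0<..}. limsup (\<lambda>n. ereal_log_rate n (Lambda_n X f n (Z n) \<xi> \<delta>)))"
  unfolding upper_CP_def
  by (intro tendsto_Lim tendsto_at_right_0_SUP_antimono Limsup_mono always_eventually allI
        ereal_log_rate_mono Lambda_n_nonneg Lambda_n_antimono) auto

lemma upper_CP_empty: "upper_CP X f (\<lambda>n. {}) \<xi> = - \<infinity>"
  by (simp add: upper_CP_eq_SUP Lambda_n_empty ereal_log_rate_def Limsup_const)

lemma upper_CP_Un_le:
  "upper_CP X f (\<lambda>n. Z n \<union> W n) \<xi> \<le> max (upper_CP X f Z \<xi>) (upper_CP X f W \<xi>)"
  unfolding upper_CP_eq_SUP
proof (rule SUP_least)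
  fix \<delta> :: real assume \<delta>: "\<delta> \<in> {0<..}"
  define rate where "rate Z n = ereal_log_rate n (Lambda_n X f n (Z n) \<xi> \<delta>)" for Z n
  define c where "c n = ereal (ln 2 / real n)" for n :: nat
  have "limsup (rate (\<lambda>n. Z n \<union> W n)) \<le> limsup (\<lambda>n. max (rate Z n) (rate W n) + c n)"
  proof (intro Limsup_mono always_eventually allI)
    fix n
    have "rate (\<lambda>n. Z n \<union> W n) n
            \<le> ereal_log_rate n (Lambda_n X f n (Z n) \<xi> \<delta> + Lambda_n X f n (W n) \<xi> \<delta>)"
      unfolding rate_def by (intro ereal_log_rate_mono Lambda_n_nonneg Lambda_n_Un_le)
    also have "\<dots> \<le> max (rate Z n) (rate W n) + c n"
      unfolding rate_def c_def by (intro ereal_log_rate_add_le Lambda_n_nonneg)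
    finally show "rate (\<lambda>n. Z n \<union> W n) n \<le> max (rate Z n) (rate W n) + c n" .
  qed
  also have "\<dots> \<le> limsup (\<lambda>n. max (rate Z n) (rate W n)) + limsup c"
    by (rule ereal_limsup_add_mono)
  also have "limsup c = 0"
    unfolding c_def zero_ereal_def
    by (intro lim_imp_Limsup tendsto_intros lim_const_over_n) simp
  also have "limsup (\<lambda>n. max (rate Z n) (rate W n)) + 0 \<le> max (limsup (rate Z)) (limsup (rate W))"
    using limsup_max_le by simp
  also have "\<dots> \<le> max (SUP \<delta>\<in>{0<..}. limsup (\<lambda>n. ereal_log_rate n (Lambda_n X f n (Z n) \<xi> \<delta>)))
                    (SUP \<delta>\<in>{0<..}. limsup (\<lambda>n. ereal_log_rate n (Lambda_n X f n (W n) \<xi> \<delta>)))"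
    using \<delta> unfolding rate_def by (intro max.mono SUP_upper)
  finally show "limsup (\<lambda>n. ereal_log_rate n (Lambda_n X f n (Z n \<union> W n) \<xi> \<delta>)) \<le> \<dots>"
    by (simp add: rate_def)
qed

lemma upper_CP_UN_le:
  assumes "finite T"
  shows "upper_CP X f (\<lambda>n. \<Union>a\<in>T. Z a n) \<xi> \<le> (SUP a\<in>T. upper_CP X f (Z a) \<xi>)"
  using assms
proof (induction T rule: finite_induct)
  case empty
  then show ?case by (simp add: upper_CP_empty)
next
  case (insert a T)
  have "upper_CP X f (\<lambda>n. \<Union>a\<in>insert a T. Z a n) \<xi>
          \<le> max (upper_CP X f (Z a) \<xi>) (upper_CP X f (\<lambda>n. \<Union>a\<in>T. Z a n) \<xi>)"
    using upper_CP_Un_le[of X f "Z a" "\<lambda>n. \<Union>a\<in>T. Z a n" \<xi>] by simp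
  also have "\<dots> \<le> max (upper_CP X f (Z a) \<xi>) (SUP a\<in>T. upper_CP X f (Z a) \<xi>)"
    using insert.IH by (rule max.mono[OF order.refl])
  also have "\<dots> = (SUP a\<in>insert a T. upper_CP X f (Z a) \<xi>)"
    by (simp add: sup_max)
  finally show ?case .
qed

lemma G_set_UN: "G_set X f \<Phi> \<Psi> n (\<Union>a\<in>T. U a) = (\<Union>a\<in>T. G_set X f \<Phi> \<Psi> n (U a))"
  unfolding G_set_def by auto

lemma upper_coarse_spectrum_mono:
  "A \<subseteq> B \<Longrightarrow> upper_coarse_spectrum X f \<Phi> \<Psi> A \<xi> \<le> upper_coarse_spectrum X f \<Phi> \<Psi> B \<xi>"
  unfolding upper_coarse_spectrum_def by (intro INF_superset_mono) auto

lemma upper_coarse_spectrum_le_SUP_singletons: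
  assumes "compact A"
  shows "upper_coarse_spectrum X f \<Phi> \<Psi> A \<xi> \<le> (SUP \<alpha>\<in>A. upper_coarse_spectrum X f \<Phi> \<Psi> {\<alpha>} \<xi>)"
proof (rule dense_ge)
  let ?CP = "\<lambda>U. upper_CP X f (\<lambda>n. G_set X f \<Phi> \<Psi> n U) \<xi>"
  fix M assume M: "(SUP \<alpha>\<in>A. upper_coarse_spectrum X f \<Phi> \<Psi> {\<alpha>} \<xi>) < M"
  have "\<exists>U. open U \<and> \<alpha> \<in> U \<and> ?CP U < M" if "\<alpha> \<in> A" for \<alpha>
  proof -
    have "upper_coarse_spectrum X f \<Phi> \<Psi> {\<alpha>} \<xi> < M"
      using M that by (meson SUP_upper le_less_trans)
    then show ?thesis unfolding upper_coarse_spectrum_def by (auto simp: INF_less_iff)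
  qed
  then obtain U where U: "\<And>\<alpha>. \<alpha> \<in> A \<Longrightarrow> open (U \<alpha>) \<and> \<alpha> \<in> U \<alpha> \<and> ?CP (U \<alpha>) < M"
    by metis
  obtain T where T: "T \<subseteq> A" "finite T" "A \<subseteq> (\<Union>\<alpha>\<in>T. U \<alpha>)"
    using compactE_image[OF assms, of A U] U by blast
  have "upper_coarse_spectrum X f \<Phi> \<Psi> A \<xi> \<le> ?CP (\<Union>\<alpha>\<in>T. U \<alpha>)"
    unfolding upper_coarse_spectrum_def using T U by (intro INF_lower) auto
  also have "\<dots> \<le> (SUP \<alpha>\<in>T. ?CP (U \<alpha>))"
    unfolding G_set_UN using \<open>finite T\<close> by (rule upper_CP_UN_le)
  also have "\<dots> \<le> M"
    using T U by (intro SUP_least less_imp_le) auto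
  finally show "upper_coarse_spectrum X f \<Phi> \<Psi> A \<xi> \<le> M" .
qed

theorem proposition2p1:
  fixes X :: "'a::metric_space set" and f :: "'a \<Rightarrow> 'a"
    and \<Phi> \<Psi> :: "'d::finite \<Rightarrow> 'a \<Rightarrow> real"
    and A :: "(real ^ 'd) set" and \<xi> :: "'a \<Rightarrow> real"
  assumes "compact X"
    and "continuous_on X f" and "f ` X \<subseteq> X"
    and "htop X f < \<infinity>"
    and "\<And>i. continuous_on X (\<Phi> i)" and "\<And>i. continuous_on X (\<Psi> i)"
    and "compact A"
    and "continuous_on X \<xi>"
  shows "upper_coarse_spectrum X f \<Phi> \<Psi> A \<xi>
           = (SUP \<alpha>\<in>A. upper_coarse_spectrum X f \<Phi> \<Psi> {\<alpha>} \<xi>)"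
proof (rule antisym)
  show "upper_coarse_spectrum X f \<Phi> \<Psi> A \<xi> \<le> (SUP \<alpha>\<in>A. upper_coarse_spectrum X f \<Phi> \<Psi> {\<alpha>} \<xi>)"
    using \<open>compact A\<close> by (rule upper_coarse_spectrum_le_SUP_singletons)
  show "(SUP \<alpha>\<in>A. upper_coarse_spectrum X f \<Phi> \<Psi> {\<alpha>} \<xi>) \<le> upper_coarse_spectrum X f \<Phi> \<Psi> A \<xi>"
    by (intro SUP_least upper_coarse_spectrum_mono) simp
qed

end
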